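(* Let $(\Omega,\mathcal F,\mathbb P)$ be an atomless probability space and $\mathcal X$ the set of all random variables on it. Let $X\in\mathcal X$ be continuously distributed, let $n\ge1$, $\alpha_1,\dots,\alpha_n>0$ with $\sum_{i=1}^n\alpha_i<1$, and $\beta\in[0,1]$. Define $V_\beta(X)=\inf\Big\{\sum_{i=1}^n\mathrm Q_{\alpha_i}(X_i): (X_1,\dots,X_n)\in\mathcal X^n,\ \sum_{i=1}^nX_i\ge X,\ X_i\uparrow_\beta X \text{ for } i=1,\dots,n\Big\}.$ Then $V_\beta(X)=\mathrm Q_\gamma(X)$, where $\gamma=\beta\wedge\big(\bigvee_{i=1}^n\alpha_i\big)+\sum_{i=1}^n(\alpha_i-\beta)_+$.
   Context: For $\alpha\in(0,1)$ and $Y\in\mathcal X$, $\mathrm Q_\alpha(Y)=\inf\{x\in\mathbb R:\mathbb P(Y\le x)\ge1-\alpha\}$ (the left $(1-\alpha)$-quantile). For $p\in[0,1)$, $\mathrm{VaR}_p(Z)=\inf\{x\in\mathbb R:\mathbb P(Z\le x)>p\}$, $A^Z_p=\{\omega: Z(\omega)>\mathrm{VaR}_p(Z)\}$ and $\mathcal P^Z_p=\{\delta_\omega\times\delta_{\omega'}:\omega\in A^Z_p,\ \omega'\in(A^Z_p)^c\}$. For random variables $Y,Z$, $Y\uparrow_\beta Z$ means that $Y$ and $Z$ are weakly comonotonic with respect to $\bigcup_{p\in[1-\beta,1)}\mathcal P^Z_p$, i.e. (for some representatives of the a.s.-classes of $Y,Z$) $(Y(\omega)-Y(\omega'))(Z(\omega)-Z(\omega'))\ge0$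 for all $p\in[1-\beta,1)$, $\omega\in A^Z_p$, $\omega'\notin A^Z_p$. (For $\beta=0$ this is no constraint.) Random variables equal a.s. are identified; $a\wedge b=\min(a,b)$, $\bigvee$ denotes maximum, $x_+=\max(x,0)$. *)

theory Defs
  imports "HOL-Probability.Probability"
begin

definition atomless :: "'a measure \<Rightarrow> bool" where
  "atomless M \<longleftrightarrow> (\<forall>A\<in>sets M. measure M A > 0 \<longrightarrow>
      (\<exists>B\<in>sets M. B \<subseteq> A \<and> 0 < measure M B \<and> measure M B < measure M A))"

definition cont_distributed :: "'a measure \<Rightarrow> ('a \<Rightarrow> real) \<Rightarrow> bool" where
  "cont_distributed M X \<longleftrightarrow> (\<forall>x. measure M {\<omega>\<in>space M. X \<omega> = x} = 0)"

definition Qa :: "'a measure \<Rightarrow> real \<Rightarrow> ('a \<Rightarrow> real) \<Rightarrow> real" where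
  "Qa M \<alpha> Y = Inf {x. measure M {\<omega>\<in>space M. Y \<omega> \<le> x} \<ge> 1 - \<alpha>}"

definition VaR :: "'a measure \<Rightarrow> real \<Rightarrow> ('a \<Rightarrow> real) \<Rightarrow> real" where
  "VaR M p Z = Inf {x. measure M {\<omega>\<in>space M. Z \<omega> \<le> x} > p}"

definition Aset :: "'a measure \<Rightarrow> real \<Rightarrow> ('a \<Rightarrow> real) \<Rightarrow> 'a set" where
  "Aset M p Z = {\<omega>\<in>space M. Z \<omega> > VaR M p Z}"

text \<open>\<open>Y \<uparrow>_\<beta> Z\<close>: weak comonotonicity w.r.t. the union of the \<open>P^Z_p\<close>, p in [1-beta,1),
  for some representatives of the a.s.-classes of Y and Z.\<close>
definition wcomon :: "'a measure \<Rightarrow> real \<Rightarrow> ('a \<Rightarrow> real) \<Rightarrow> ('a \<Rightarrow> real) \<Rightarrow> bool" where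
  "wcomon M \<beta> Y Z \<longleftrightarrow> (\<exists>Y' Z'. Y' \<in> borel_measurable M \<and> Z' \<in> borel_measurable M \<and>
      (AE \<omega> in M. Y' \<omega> = Y \<omega>) \<and> (AE \<omega> in M. Z' \<omega> = Z \<omega>) \<and>
      (\<forall>p. 1 - \<beta> \<le> p \<and> p < 1 \<longrightarrow>
         (\<forall>\<omega>\<in>Aset M p Z'. \<forall>\<omega>'\<in>space M - Aset M p Z'.
            (Y' \<omega> - Y' \<omega>') * (Z' \<omega> - Z' \<omega>') \<ge> 0)))"

definition Vbeta :: "'a measure \<Rightarrow> nat \<Rightarrow> (nat \<Rightarrow> real) \<Rightarrow> real \<Rightarrow> ('a \<Rightarrow> real) \<Rightarrow> ereal" where
  "Vbeta M n \<alpha> \<beta> X = Inf {ereal (\<Sum>i<n. Qa M (\<alpha> i) (Xs i)) | Xs.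
      (\<forall>i<n. Xs i \<in> borel_measurable M) \<and>
      (AE \<omega> in M. (\<Sum>i<n. Xs i \<omega>) \<ge> X \<omega>) \<and>
      (\<forall>i<n. wcomon M \<beta> (Xs i) X)}"

end

theory Submission
  imports Defs
begin

text \<open>Lower bound: for an admissible allocation with quantiles \<open>q i\<close>, the events
  \<open>{Xs i > q i}\<close> have probability at most \<open>\<alpha> i\<close> and almost surely cover
  \<open>{X > \<Sum>i. q i}\<close>. Weak comonotonicity forces each of them, up to a null set, to lie
  inside or to contain every upper tail of \<open>X\<close> of probability \<open>t \<le> \<beta>\<close>; for
  \<open>t = min \<beta> (Max \<alpha>)\<close> this bounds \<open>P(X > \<Sum>i. q i)\<close> by \<open>\<gamma>\<close>, i.e.
  \<open>Q\<^sub>\<gamma>(X) \<le> \<Sum>i. q i\<close>.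

  Upper bound: with \<open>c = Q\<^sub>\<gamma>(X)\<close>, an agent \<open>j\<close> with maximal \<open>\<alpha> j\<close> receives
  \<open>min X c\<close>, and the excess \<open>(X - c)\<^sub>+\<close> is carried on events \<open>E i\<close> of probability at
  most \<open>\<alpha> i\<close> that cover \<open>{X > c}\<close>. If \<open>Max \<alpha> \<le> \<beta>\<close>, agent \<open>j\<close> takes all of it.
  Otherwise every agent with \<open>\<alpha> i > \<beta>\<close> takes the whole top \<open>\<beta>\<close>-tail of \<open>X\<close>, which
  keeps it comonotone with \<open>X\<close> on the tails that matter, plus its own layer of
  probability \<open>\<alpha> i - \<beta>\<close> stacked directly below that tail.\<close>

section \<open>Quantiles\<close>

context real_distribution
begin

lemma cdf_gt_nonempty: "r < 1 \<Longrightarrow> {x. r < cdf M x} \<noteq> {}"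
  using order_tendstoD(1)[OF cdf_lim_at_top_prob] by (auto simp: eventually_at_top_linorder)

lemma bdd_below_cdf_ge: "0 < r \<Longrightarrow> bdd_below {x. r \<le> cdf M x}"
proof -
  assume "0 < r"
  then obtain b where b: "\<And>x. x \<le> b \<Longrightarrow> cdf M x < r"
    using order_tendstoD(2)[OF cdf_lim_at_bot] by (auto simp: eventually_at_bot_linorder)
  show ?thesis
  proof (rule bdd_belowI)
    fix x assume "x \<in> {x. r \<le> cdf M x}"
    then show "b \<le> x" using b[of x] by fastforce
  qed
qed

text \<open>\<^const>\<open>Qa\<close> and \<^const>\<open>VaR\<close> are infima of sets lying between the strict and the
  non-strict superlevel sets of the cdf, which is all that is used about them.\<close>

lemma cdf_Inf_ge:
  assumes "0 < r" "r < 1" "{x. r < cdf M x} \<subseteq> S" "S \<subseteq> {x. r \<le> cdf M x}"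
  shows "r \<le> cdf M (Inf S)"
proof (rule tendsto_lowerbound)
  have ne: "S \<noteq> {}"
    using assms(2,3) cdf_gt_nonempty by blast
  have bdd: "bdd_below S"
    using bdd_below_mono[OF bdd_below_cdf_ge[OF assms(1)] assms(4)] .
  show "(cdf M \<longlongrightarrow> cdf M (Inf S)) (at_right (Inf S))"
    using cdf_is_right_cont by (simp add: continuous_within)
  show "\<forall>\<^sub>F x in at_right (Inf S). r \<le> cdf M x"
  proof (rule eventually_mono[OF eventually_at_right_less])
    fix x assume "Inf S < x"
    then obtain y where "y \<in> S" "y < x" using ne bdd by (meson cInf_lessD)
    then show "r \<le> cdf M x"
      using assms(4) cdf_nondecreasing[of y x] by auto
  qed
qed simp

lemma cdf_Inf_le:
  assumes "0 < r" "{x. r < cdf M x} \<subseteq> S" "S \<subseteq> {x. r \<le> cdf M x}"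
    and "measure M {Inf S} = 0"
  shows "cdf M (Inf S) \<le> r"
proof (rule tendsto_upperbound)
  have bdd: "bdd_below S"
    using bdd_below_mono[OF bdd_below_cdf_ge[OF assms(1)] assms(3)] .
  show "(cdf M \<longlongrightarrow> cdf M (Inf S)) (at_left (Inf S))"
    using iffD2[OF isCont_cdf assms(4)] by (simp add: isCont_def filterlim_at_split)
  have "cdf M x \<le> r" if "x < Inf S" for x
  proof -
    have "x \<notin> S" using that bdd cInf_lower leD by blast
    then show ?thesis using assms(2) not_less by blast
  qed
  then show "\<forall>\<^sub>F x in at_left (Inf S). cdf M x \<le> r"
    unfolding eventually_at_left_field by (intro exI[of _ "Inf S - 1"]) auto
qed simp

end

context prob_space
begin

lemma prob_le_eq_cdf_distr:
  assumes "Y \<in> borel_measurable M"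
  shows "prob {\<omega>\<in>space M. Y \<omega> \<le> x} = cdf (distr M borel Y) x"
  using assms by (simp add: cdf_def measure_distr vimage_def Int_def conj_commute)

lemma Qa_eq_Inf_cdf:
  "Y \<in> borel_measurable M \<Longrightarrow> Qa M a Y = Inf {x. 1 - a \<le> cdf (distr M borel Y) x}"
  by (simp add: Qa_def prob_le_eq_cdf_distr)

lemma VaR_eq_Inf_cdf:
  "Y \<in> borel_measurable M \<Longrightarrow> VaR M p Y = Inf {x. p < cdf (distr M borel Y) x}"
  by (simp add: VaR_def prob_le_eq_cdf_distr)

lemma cont_distributed_atoms:
  assumes "Y \<in> borel_measurable M" "cont_distributed M Y"
  shows "measure (distr M borel Y) {x} = 0"
  using assms by (simp add: cont_distributed_def measure_distr vimage_def Int_def conj_commute)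

lemma prob_gt_eq:
  fixes Y :: "'a \<Rightarrow> real"
  assumes "Y \<in> borel_measurable M"
  shows "prob {\<omega>\<in>space M. x < Y \<omega>} = 1 - prob {\<omega>\<in>space M. Y \<omega> \<le> x}"
proof -
  have "{\<omega>\<in>space M. x < Y \<omega>} = space M - {\<omega>\<in>space M. Y \<omega> \<le> x}" by auto
  moreover have "{\<omega>\<in>space M. Y \<omega> \<le> x} \<in> events" using assms by measurable
  ultimately show ?thesis by (simp add: prob_compl)
qed

lemma Qa_le_of_prob_gt_le:
  assumes Y: "Y \<in> borel_measurable M" and a: "0 < a" "a < 1"
    and "prob {\<omega>\<in>space M. x < Y \<omega>} \<le> a"
  shows "Qa M a Y \<le> x"
proof -
  interpret D: real_distribution "distr M borel Y" using Y by simp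
  have "1 - a \<le> cdf (distr M borel Y) x"
    using assms prob_gt_eq[OF Y, of x] prob_le_eq_cdf_distr[OF Y, of x] by simp
  then show ?thesis
    unfolding Qa_eq_Inf_cdf[OF Y]
    by (intro cInf_lower D.bdd_below_cdf_ge) (use a in auto)
qed

lemma prob_gt_Qa_le:
  assumes Y: "Y \<in> borel_measurable M" and a: "0 < a" "a < 1"
  shows "prob {\<omega>\<in>space M. Qa M a Y < Y \<omega>} \<le> a"
proof -
  interpret D: real_distribution "distr M borel Y" using Y by simp
  have "1 - a \<le> cdf (distr M borel Y) (Qa M a Y)"
    unfolding Qa_eq_Inf_cdf[OF Y] using a by (intro D.cdf_Inf_ge) auto
  then show ?thesis
    using prob_gt_eq[OF Y] prob_le_eq_cdf_distr[OF Y] by simp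
qed

lemma prob_gt_Qa_eq:
  assumes Y: "Y \<in> borel_measurable M" "cont_distributed M Y" and a: "0 < a" "a < 1"
  shows "prob {\<omega>\<in>space M. Qa M a Y < Y \<omega>} = a"
proof -
  interpret D: real_distribution "distr M borel Y" using Y by simp
  have "cdf (distr M borel Y) (Qa M a Y) \<le> 1 - a"
    unfolding Qa_eq_Inf_cdf[OF Y(1)] using a cont_distributed_atoms[OF Y]
    by (intro D.cdf_Inf_le) auto
  then show ?thesis
    using prob_gt_Qa_le[OF Y(1) a] prob_gt_eq[OF Y(1)] prob_le_eq_cdf_distr[OF Y(1)] by simp
qed

lemma prob_Aset:
  assumes Y: "Y \<in> borel_measurable M" "cont_distributed M Y" and p: "0 < p" "p < 1"
  shows "prob (Aset M p Y) = 1 - p"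
proof -
  interpret D: real_distribution "distr M borel Y" using Y by simp
  have "p \<le> cdf (distr M borel Y) (VaR M p Y)" "cdf (distr M borel Y) (VaR M p Y) \<le> p"
    unfolding VaR_eq_Inf_cdf[OF Y(1)] using p cont_distributed_atoms[OF Y]
    by (intro D.cdf_Inf_ge D.cdf_Inf_le; auto)+
  then show ?thesis
    using prob_gt_eq[OF Y(1)] prob_le_eq_cdf_distr[OF Y(1)] by (simp add: Aset_def)
qed

lemma VaR_mono:
  assumes Y: "Y \<in> borel_measurable M" and p: "0 < p" "p \<le> p'" "p' < 1"
  shows "VaR M p Y \<le> VaR M p' Y"
proof -
  interpret D: real_distribution "distr M borel Y" using Y by simp
  show ?thesis
    unfolding VaR_eq_Inf_cdf[OF Y]
  proof (rule cInf_superset_mono)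
    show "bdd_below {x. p < cdf (distr M borel Y) x}"
      by (rule bdd_below_mono[OF D.bdd_below_cdf_ge[OF p(1)]]) auto
  qed (use p D.cdf_gt_nonempty in auto)
qed

lemma Qa_le_VaR:
  assumes Y: "Y \<in> borel_measurable M" and a: "0 < a" "a < 1"
  shows "Qa M a Y \<le> VaR M (1 - a) Y"
proof -
  interpret D: real_distribution "distr M borel Y" using Y by simp
  show ?thesis
    unfolding VaR_eq_Inf_cdf[OF Y] Qa_eq_Inf_cdf[OF Y]
    by (rule cInf_superset_mono) (use a D.cdf_gt_nonempty D.bdd_below_cdf_ge in auto)
qed

end

section \<open>Weak comonotonicity and upper tails\<close>

lemma wcomon_if_dominated_by_mono:
  fixes X Y :: "'a \<Rightarrow> real" and g :: "real \<Rightarrow> real"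
  assumes "Y \<in> borel_measurable M" "X \<in> borel_measurable M" "mono g"
    and dom: "\<And>\<omega>. \<omega> \<in> space M \<Longrightarrow> Y \<omega> \<le> g (X \<omega>)"
    and eq: "\<And>p \<omega>. 1 - \<beta> \<le> p \<Longrightarrow> p < 1 \<Longrightarrow> \<omega> \<in> Aset M p X \<Longrightarrow> Y \<omega> = g (X \<omega>)"
  shows "wcomon M \<beta> Y X"
  unfolding wcomon_def
proof (intro exI conjI allI impI ballI)
  fix p \<omega> \<omega>' assume p: "1 - \<beta> \<le> p \<and> p < 1"
    and \<omega>: "\<omega> \<in> Aset M p X" and \<omega>': "\<omega>' \<in> space M - Aset M p X"
  have "X \<omega>' < X \<omega>" using \<omega> \<omega>' by (auto simp: Aset_def)
  then have "Y \<omega>' \<le> Y \<omega>"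
    using dom[of \<omega>'] \<omega>' eq[of p \<omega>] p \<omega> monoD[OF \<open>mono g\<close>, of "X \<omega>'" "X \<omega>"] by auto
  then show "0 \<le> (Y \<omega> - Y \<omega>') * (X \<omega> - X \<omega>')"
    using \<open>X \<omega>' < X \<omega>\<close> by simp
qed (use assms in auto)

lemma comonotone_superlevel_dichotomy:
  fixes Y Z :: "'a \<Rightarrow> real"
  assumes "\<forall>\<omega>\<in>A. \<forall>\<omega>'\<in>S - A. 0 \<le> (Y \<omega> - Y \<omega>') * (Z \<omega> - Z \<omega>')"
    and "A = {\<omega>\<in>S. v < Z \<omega>}"
  shows "{\<omega>\<in>S. q < Y \<omega>} \<subseteq> A \<or> A \<subseteq> {\<omega>\<in>S. q < Y \<omega>}"
proof (rule ccontr)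
  assume contra: "\<not> ?thesis"
  then obtain \<omega>' where \<omega>': "\<omega>' \<in> S - A" "q < Y \<omega>'" by blast
  obtain \<omega> where \<omega>: "\<omega> \<in> A" "\<not> q < Y \<omega>"
    using contra assms(2) by blast
  have "Z \<omega>' < Z \<omega>" using \<omega>(1) \<omega>'(1) assms(2) by auto
  moreover have "0 \<le> (Y \<omega> - Y \<omega>') * (Z \<omega> - Z \<omega>')"
    using assms(1) \<omega>(1) \<omega>'(1) by blast
  ultimately show False
    using \<omega>(2) \<omega>'(2) by (simp add: zero_le_mult_iff)
qed

text \<open>For \<open>t = 0\<close> the level \<open>1 - t\<close> would make \<^const>\<open>VaR\<close> the infimum of the
  empty set, so the empty tail is put in explicitly.\<close>
definition upper_tail :: "'a measure \<Rightarrow> real \<Rightarrow> ('a \<Rightarrow> real) \<Rightarrow> 'a set" where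
  "upper_tail M t X = (if t \<le> 0 then {} else Aset M (1 - t) X)"

context prob_space
begin

lemma sets_upper_tail [measurable]:
  assumes "X \<in> borel_measurable M"
  shows "upper_tail M t X \<in> events"
proof -
  have "Aset M p X \<in> events" for p
    unfolding Aset_def using assms by measurable
  then show ?thesis by (simp add: upper_tail_def)
qed

lemma prob_upper_tail:
  "X \<in> borel_measurable M \<Longrightarrow> cont_distributed M X \<Longrightarrow> 0 \<le> t \<Longrightarrow> t < 1 \<Longrightarrow>
    prob (upper_tail M t X) = t"
  by (simp add: upper_tail_def prob_Aset)

lemma upper_tail_mono:
  assumes "X \<in> borel_measurable M" "t \<le> t'" "t' < 1"
  shows "upper_tail M t X \<subseteq> upper_tail M t' X"
  using VaR_mono[OF assms(1), of "1 - t'" "1 - t"] assms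
  by (auto simp: upper_tail_def Aset_def)

lemma Aset_subset_upper_tail:
  assumes "X \<in> borel_measurable M" "1 - \<beta> \<le> p" "p < 1" "\<beta> < 1"
  shows "Aset M p X \<subseteq> upper_tail M \<beta> X"
proof -
  have "Aset M p X = upper_tail M (1 - p) X" using assms by (simp add: upper_tail_def)
  also have "\<dots> \<subseteq> upper_tail M \<beta> X" using assms by (intro upper_tail_mono) auto
  finally show ?thesis .
qed

lemma AE_gt_Qa_in_upper_tail:
  assumes X: "X \<in> borel_measurable M" "cont_distributed M X" and a: "0 < a" "a < 1"
  shows "AE \<omega> in M. Qa M a X < X \<omega> \<longrightarrow> \<omega> \<in> upper_tail M a X"
proof -
  let ?G = "{\<omega>\<in>space M. Qa M a X < X \<omega>}"
  have G: "?G \<in> events" using X by measurable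
  have sub: "upper_tail M a X \<subseteq> ?G"
    using Qa_le_VaR[OF X(1) a] a by (auto simp: upper_tail_def Aset_def)
  have "prob (?G - upper_tail M a X) = 0"
    using finite_measure_Diff[OF G sets_upper_tail[OF X(1)] sub]
      prob_gt_Qa_eq[OF X a] prob_upper_tail[OF X] a by simp
  then have "?G - upper_tail M a X \<in> null_sets M"
    using G X(1) by (simp add: emeasure_eq_measure null_setsI)
  with AE_space show ?thesis by (rule AE_mp[OF _ AE_mp[OF AE_not_in]]) auto
qed

lemma VaR_AE_cong:
  assumes "Z \<in> borel_measurable M" "Z' \<in> borel_measurable M" "AE \<omega> in M. Z' \<omega> = Z \<omega>"
  shows "VaR M p Z' = VaR M p Z"
proof -
  have "prob {\<omega>\<in>space M. Z' \<omega> \<le> x} = prob {\<omega>\<in>space M. Z \<omega> \<le> x}" for x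
    by (rule measure_eq_AE) (use assms in \<open>auto\<close>)
  then show ?thesis by (simp add: VaR_def)
qed

lemma wcomon_dichotomy:
  fixes X Y :: "'a \<Rightarrow> real" and q :: real
  assumes X: "X \<in> borel_measurable M" and Y: "Y \<in> borel_measurable M"
    and w: "wcomon M \<beta> Y X" and t: "0 \<le> t" "t \<le> \<beta>" "t < 1"
  defines "D \<equiv> {\<omega>\<in>space M. q < Y \<omega>}" and "T \<equiv> upper_tail M t X"
  shows "prob (D - T) = 0 \<or> prob (T - D) = 0"
proof (cases "t = 0")
  case True
  then show ?thesis by (simp add: T_def upper_tail_def)
next
  case False
  define p where "p = 1 - t"
  have p: "1 - \<beta> \<le> p" "p < 1" and T: "T = Aset M p X"
    using t False by (auto simp: p_def T_def upper_tail_def)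
  obtain Y' Z' where Y': "Y' \<in> borel_measurable M" and Z': "Z' \<in> borel_measurable M"
    and aY: "AE \<omega> in M. Y' \<omega> = Y \<omega>" and aZ: "AE \<omega> in M. Z' \<omega> = X \<omega>"
    and cm: "\<forall>\<omega>\<in>Aset M p Z'. \<forall>\<omega>'\<in>space M - Aset M p Z'. 0 \<le> (Y' \<omega> - Y' \<omega>') * (Z' \<omega> - Z' \<omega>')"
    using w p unfolding wcomon_def by blast
  let ?D' = "{\<omega>\<in>space M. q < Y' \<omega>}" and ?T' = "Aset M p Z'"
  have sets: "D \<in> events" "?D' \<in> events" "T \<in> events" "?T' \<in> events"
    using X Y Y' Z' unfolding D_def T Aset_def by measurable
  have VaR_eq: "VaR M p Z' = VaR M p X" using VaR_AE_cong[OF X Z' aZ] .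
  have AE_eq: "AE \<omega> in M. (\<omega> \<in> D \<longleftrightarrow> \<omega> \<in> ?D') \<and> (\<omega> \<in> T \<longleftrightarrow> \<omega> \<in> ?T')"
    using aY aZ by eventually_elim (auto simp: D_def T Aset_def VaR_eq)
  have "prob (D - T) = prob (?D' - ?T')" "prob (T - D) = prob (?T' - ?D')"
    by (rule measure_eq_AE; use AE_eq sets in \<open>auto\<close>)+
  moreover have "?D' \<subseteq> ?T' \<or> ?T' \<subseteq> ?D'"
    using comonotone_superlevel_dichotomy[OF cm] by (simp add: Aset_def)
  ultimately show ?thesis by (metis Diff_eq_empty_iff measure_empty)
qed

end

section \<open>The lower bound\<close>

definition admissible :: "'a measure \<Rightarrow> nat \<Rightarrow> real \<Rightarrow> ('a \<Rightarrow> real) \<Rightarrow> (nat \<Rightarrow> 'a \<Rightarrow> real) \<Rightarrow> bool"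
  where "admissible M n \<beta> X Xs \<longleftrightarrow> (\<forall>i<n. Xs i \<in> borel_measurable M) \<and>
    (AE \<omega> in M. X \<omega> \<le> (\<Sum>i<n. Xs i \<omega>)) \<and> (\<forall>i<n. wcomon M \<beta> (Xs i) X)"

lemma Vbeta_eq_Inf_admissible:
  "Vbeta M n \<alpha> \<beta> X = Inf {ereal (\<Sum>i<n. Qa M (\<alpha> i) (Xs i)) | Xs. admissible M n \<beta> X Xs}"
  by (simp add: Vbeta_def admissible_def)

lemma ex_Max_lessThan:
  fixes f :: "nat \<Rightarrow> 'b::linorder"
  assumes "0 < n"
  obtains i where "i < n" "f i = Max (f ` {..<n})"
  using Max_in[of "f ` {..<n}"] assms by fastforce

lemma level_eq_min_Max:
  fixes \<alpha> :: "nat \<Rightarrow> real" and \<beta> :: real and n :: nat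
  defines "t \<equiv> min \<beta> (Max (\<alpha> ` {..<n}))"
  shows "t + (\<Sum>i<n. max (\<alpha> i - \<beta>) 0) = t + (\<Sum>i<n. max (\<alpha> i - t) 0)"
proof (cases "\<beta> \<le> Max (\<alpha> ` {..<n})")
  case False
  have "max (\<alpha> i - \<beta>) 0 = 0" "max (\<alpha> i - t) 0 = 0" if "i < n" for i
  proof -
    have "\<alpha> i \<le> Max (\<alpha> ` {..<n})" using that by simp
    then show "max (\<alpha> i - \<beta>) 0 = 0" "max (\<alpha> i - t) 0 = 0" using False by (auto simp: t_def)
  qed
  then show ?thesis by simp
qed (simp add: t_def)

lemma level_bounds:
  fixes \<alpha> :: "nat \<Rightarrow> real" and \<beta> :: real and n :: nat
  assumes "0 < n" "\<forall>i<n. 0 \<le> \<alpha> i" "0 \<le> \<beta>"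
  defines "\<gamma> \<equiv> min \<beta> (Max (\<alpha> ` {..<n})) + (\<Sum>i<n. max (\<alpha> i - \<beta>) 0)"
  shows "Max (\<alpha> ` {..<n}) \<le> \<gamma>" "\<gamma> \<le> (\<Sum>i<n. \<alpha> i)"
proof -
  obtain j where j: "j < n" "\<alpha> j = Max (\<alpha> ` {..<n})"
    using ex_Max_lessThan[OF assms(1)] .
  have split: "(\<Sum>i<n. f i) = f j + (\<Sum>i\<in>{..<n}-{j}. f i)" for f :: "nat \<Rightarrow> real"
    using j(1) by (simp add: sum.remove)
  have "min \<beta> (\<alpha> j) + max (\<alpha> j - \<beta>) 0 = \<alpha> j" by linarith
  moreover have "0 \<le> (\<Sum>i\<in>{..<n}-{j}. max (\<alpha> i - \<beta>) 0)"
    by (intro sum_nonneg) auto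
  moreover have "(\<Sum>i\<in>{..<n}-{j}. max (\<alpha> i - \<beta>) 0) \<le> (\<Sum>i\<in>{..<n}-{j}. \<alpha> i)"
    using assms(2,3) by (intro sum_mono) auto
  ultimately show "Max (\<alpha> ` {..<n}) \<le> \<gamma>" "\<gamma> \<le> (\<Sum>i<n. \<alpha> i)"
    unfolding \<gamma>_def split[of "\<lambda>i. max (\<alpha> i - \<beta>) 0"] split[of \<alpha>] j(2)[symmetric] by linarith+
qed

lemma (in finite_measure) measure_Diff_le_if_dichotomy:
  assumes "A \<in> sets M" "B \<in> sets M" "measure M (A - B) = 0 \<or> measure M (B - A) = 0"
  shows "measure M (A - B) \<le> max (measure M A - measure M B) 0"
  using assms(3)
proof
  assume "measure M (B - A) = 0"
  then have "measure M B = measure M (A \<inter> B)"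
    using finite_measure_Diff'[OF assms(2,1)] by (simp add: Int_commute)
  then show ?thesis using finite_measure_Diff'[OF assms(1,2)] by simp
qed simp

lemma (in finite_measure) measure_UN_le_measure_add_Diff:
  assumes "finite I" "T \<in> sets M" "\<And>i. i \<in> I \<Longrightarrow> D i \<in> sets M"
  shows "measure M (\<Union>i\<in>I. D i) \<le> measure M T + (\<Sum>i\<in>I. measure M (D i - T))"
proof -
  have "measure M (\<Union>i\<in>I. D i) \<le> measure M (T \<union> (\<Union>i\<in>I. D i - T))"
    using assms by (intro finite_measure_mono) auto
  also have "\<dots> \<le> measure M T + measure M (\<Union>i\<in>I. D i - T)"
    using assms by (intro measure_Un_le sets.finite_UN sets.Diff) auto
  also have "measure M (\<Union>i\<in>I. D i - T) \<le> (\<Sum>i\<in>I. measure M (D i - T))"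
    using assms by (intro measure_UNION_le) auto
  finally show ?thesis by simp
qed

context prob_space
begin

lemma prob_gt_sum_le_prob_UN:
  fixes X :: "'a \<Rightarrow> real" and Y :: "'i \<Rightarrow> 'a \<Rightarrow> real"
  assumes "finite I" "\<And>i. i \<in> I \<Longrightarrow> Y i \<in> borel_measurable M"
    and "AE \<omega> in M. X \<omega> \<le> (\<Sum>i\<in>I. Y i \<omega>)"
  shows "prob {\<omega>\<in>space M. (\<Sum>i\<in>I. q i) < X \<omega>} \<le> prob (\<Union>i\<in>I. {\<omega>\<in>space M. q i < Y i \<omega>})"
proof (rule finite_measure_mono_AE)
  show "AE \<omega> in M. \<omega> \<in> {\<omega>\<in>space M. (\<Sum>i\<in>I. q i) < X \<omega>} \<longrightarrow>
      \<omega> \<in> (\<Union>i\<in>I. {\<omega>\<in>space M. q i < Y i \<omega>})"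
    using assms(3)
  proof eventually_elim
    case (elim \<omega>)
    show ?case
    proof (rule impI, rule ccontr)
      assume \<omega>: "\<omega> \<in> {\<omega>\<in>space M. (\<Sum>i\<in>I. q i) < X \<omega>}"
        and "\<omega> \<notin> (\<Union>i\<in>I. {\<omega>\<in>space M. q i < Y i \<omega>})"
      then have "(\<Sum>i\<in>I. Y i \<omega>) \<le> (\<Sum>i\<in>I. q i)"
        by (intro sum_mono) (auto simp: not_less)
      with elim \<omega> show False by simp
    qed
  qed
  have "{\<omega>\<in>space M. q i < Y i \<omega>} \<in> events" if "i \<in> I" for i
    using assms(2)[OF that] by measurable
  then show "(\<Union>i\<in>I. {\<omega>\<in>space M. q i < Y i \<omega>}) \<in> events"
    using assms(1) by auto
qed

lemma prob_gt_sum_Qa_le: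
  fixes X :: "'a \<Rightarrow> real"
  assumes X: "X \<in> borel_measurable M" "cont_distributed M X"
    and adm: "admissible M n \<beta> X Xs" and \<alpha>: "\<forall>i<n. 0 < \<alpha> i \<and> \<alpha> i < 1"
    and t: "0 \<le> t" "t \<le> \<beta>" "t < 1"
  shows "prob {\<omega>\<in>space M. (\<Sum>i<n. Qa M (\<alpha> i) (Xs i)) < X \<omega>} \<le> t + (\<Sum>i<n. max (\<alpha> i - t) 0)"
proof -
  define D where "D i = {\<omega>\<in>space M. Qa M (\<alpha> i) (Xs i) < Xs i \<omega>}" for i
  define T where "T = upper_tail M t X"
  have Xs: "\<And>i. i < n \<Longrightarrow> Xs i \<in> borel_measurable M"
    using adm by (simp add: admissible_def)
  have D: "\<And>i. i < n \<Longrightarrow> D i \<in> events"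
    unfolding D_def using Xs by measurable
  have T: "T \<in> events" "prob T = t"
    using X t by (simp_all add: T_def prob_upper_tail)
  have "prob (D i - T) \<le> max (\<alpha> i - t) 0" if i: "i < n" for i
  proof -
    have "prob (D i - T) \<le> max (prob (D i) - prob T) 0"
      using adm i X(1) Xs[OF i] t unfolding D_def T_def admissible_def
      by (intro measure_Diff_le_if_dichotomy wcomon_dichotomy) auto
    moreover have "prob (D i) \<le> \<alpha> i"
      using prob_gt_Qa_le[OF Xs[OF i]] \<alpha> i by (simp add: D_def)
    ultimately show ?thesis using T(2) by linarith
  qed
  then have "prob T + (\<Sum>i<n. prob (D i - T)) \<le> t + (\<Sum>i<n. max (\<alpha> i - t) 0)"
    using T(2) by (auto intro!: sum_mono)
  moreover have "prob {\<omega>\<in>space M. (\<Sum>i<n. Qa M (\<alpha> i) (Xs i)) < X \<omega>} \<le> prob (\<Union>i<n. D i)"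
    using adm Xs unfolding D_def admissible_def by (intro prob_gt_sum_le_prob_UN) auto
  moreover have "prob (\<Union>i<n. D i) \<le> prob T + (\<Sum>i<n. prob (D i - T))"
    using T D by (intro measure_UN_le_measure_add_Diff) auto
  ultimately show ?thesis by linarith
qed

end

section \<open>The upper bound\<close>

lemma subset_Un_UN_Diff_Suc: "A n \<subseteq> A 0 \<union> (\<Union>i<n. A (Suc i) - A i)"
  by (induction n) (auto simp: lessThan_Suc)

text \<open>The events \<open>E i\<close> may overlap, so the shares add up to at least \<open>X\<close>, not
  exactly to \<open>X\<close>.\<close>

definition excess_split :: "nat \<Rightarrow> real \<Rightarrow> (nat \<Rightarrow> 'a set) \<Rightarrow> ('a \<Rightarrow> real) \<Rightarrow> nat \<Rightarrow> 'a \<Rightarrow> real"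
  where "excess_split j c E X i \<omega> =
    (if i = j then min (X \<omega>) c else 0) + max (X \<omega> - c) 0 * indicator (E i) \<omega>"

definition excess_cover ::
    "'a measure \<Rightarrow> nat \<Rightarrow> (nat \<Rightarrow> real) \<Rightarrow> real \<Rightarrow> ('a \<Rightarrow> real) \<Rightarrow> real \<Rightarrow> (nat \<Rightarrow> 'a set) \<Rightarrow> bool"
  where "excess_cover M n \<alpha> \<beta> X c E \<longleftrightarrow> (\<forall>i<n. E i \<in> sets M) \<and>
    (\<forall>i<n. measure M (E i \<inter> {\<omega>\<in>space M. c < X \<omega>}) \<le> \<alpha> i) \<and>
    (AE \<omega> in M. c < X \<omega> \<longrightarrow> (\<exists>i<n. \<omega> \<in> E i)) \<and>
    (\<forall>i<n. E i = {} \<or> (\<forall>p. 1 - \<beta> \<le> p \<and> p < 1 \<longrightarrow> Aset M p X \<subseteq> E i))"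

lemma sum_excess_split:
  assumes "j < n"
  shows "(\<Sum>i<n. excess_split j c E X i \<omega>) =
    min (X \<omega>) c + (\<Sum>i<n. max (X \<omega> - c) 0 * indicator (E i) \<omega>)"
  using assms by (simp add: excess_split_def sum.distrib)

lemma X_le_sum_excess_split:
  fixes X :: "'a \<Rightarrow> real"
  assumes "j < n" "c < X \<omega> \<longrightarrow> (\<exists>i<n. \<omega> \<in> E i)"
  shows "X \<omega> \<le> (\<Sum>i<n. excess_split j c E X i \<omega>)"
proof -
  have nonneg: "0 \<le> max (X \<omega> - c) 0 * indicator (E i) \<omega>" for i by simp
  have "X \<omega> \<le> min (X \<omega>) c + (\<Sum>i<n. max (X \<omega> - c) 0 * indicator (E i) \<omega>)"
  proof (cases "c < X \<omega>")
    case True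
    then obtain k where "k < n" "\<omega> \<in> E k" using assms(2) by blast
    then have "max (X \<omega> - c) 0 * indicator (E k) \<omega> \<le> (\<Sum>i<n. max (X \<omega> - c) 0 * indicator (E i) \<omega>)"
      by (intro member_le_sum nonneg) auto
    moreover have "max (X \<omega> - c) 0 * indicator (E k) \<omega> = X \<omega> - c"
      using True \<open>\<omega> \<in> E k\<close> by simp
    ultimately show ?thesis by linarith
  qed (use sum_nonneg[OF nonneg] in simp)
  then show ?thesis by (simp only: sum_excess_split[OF assms(1)])
qed

context prob_space
begin

lemma admissible_excess_split:
  fixes X :: "'a \<Rightarrow> real"
  assumes X: "X \<in> borel_measurable M" and j: "j < n"
    and E: "excess_cover M n \<alpha> \<beta> X c E" and \<alpha>: "\<forall>i<n. 0 < \<alpha> i \<and> \<alpha> i < 1"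
  shows "admissible M n \<beta> X (excess_split j c E X)"
    and "(\<Sum>i<n. Qa M (\<alpha> i) (excess_split j c E X i)) \<le> c"
proof -
  let ?Y = "excess_split j c E X"
  have Y: "?Y i \<in> borel_measurable M" if "i < n" for i
  proof -
    have [measurable]: "E i \<in> events" using E that by (simp add: excess_cover_def)
    show ?thesis unfolding excess_split_def using X by measurable
  qed
  have "AE \<omega> in M. c < X \<omega> \<longrightarrow> (\<exists>i<n. \<omega> \<in> E i)"
    using E by (simp add: excess_cover_def)
  then have "AE \<omega> in M. X \<omega> \<le> (\<Sum>i<n. ?Y i \<omega>)"
    by eventually_elim (rule X_le_sum_excess_split[OF j])
  moreover have "wcomon M \<beta> (?Y i) X" if i: "i < n" for i
  proof (rule wcomon_if_dominated_by_mono[OF Y[OF i] X])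
    let ?g = "\<lambda>x. (if i = j then min x c else 0) + (if E i = {} then 0 else max (x - c) 0)"
    show "mono ?g" by (intro monoI add_mono) auto
    show "?Y i \<omega> \<le> ?g (X \<omega>)" for \<omega>
      by (auto simp: excess_split_def indicator_def)
    show "?Y i \<omega> = ?g (X \<omega>)" if "1 - \<beta> \<le> p" "p < 1" "\<omega> \<in> Aset M p X" for p \<omega>
    proof (cases "E i = {}")
      case False
      then have "\<omega> \<in> E i" using E i that unfolding excess_cover_def by blast
      then show ?thesis using False by (simp add: excess_split_def)
    qed (simp add: excess_split_def)
  qed
  ultimately show "admissible M n \<beta> X ?Y" using Y by (simp add: admissible_def)
  have "Qa M (\<alpha> i) (?Y i) \<le> (if i = j then c else 0)" if i: "i < n" for i
  proof (rule Qa_le_of_prob_gt_le[OF Y[OF i]])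
    have "{\<omega>\<in>space M. (if i = j then c else 0) < ?Y i \<omega>} \<subseteq> E i \<inter> {\<omega>\<in>space M. c < X \<omega>}"
      by (auto simp: excess_split_def indicator_def split: if_splits)
    then have "prob {\<omega>\<in>space M. (if i = j then c else 0) < ?Y i \<omega>} \<le> prob (E i \<inter> {\<omega>\<in>space M. c < X \<omega>})"
      using E i X unfolding excess_cover_def by (intro finite_measure_mono) auto
    then show "prob {\<omega>\<in>space M. (if i = j then c else 0) < ?Y i \<omega>} \<le> \<alpha> i"
      using E i unfolding excess_cover_def by auto
  qed (use \<alpha> i in auto)
  then have "(\<Sum>i<n. Qa M (\<alpha> i) (?Y i)) \<le> (\<Sum>i<n. if i = j then c else 0)"
    by (intro sum_mono) auto
  then show "(\<Sum>i<n. Qa M (\<alpha> i) (?Y i)) \<le> c" using j by simp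
qed

lemma excess_cover_single:
  fixes X :: "'a \<Rightarrow> real"
  assumes X: "X \<in> borel_measurable M" and j: "j < n" "0 < \<alpha> j" "\<alpha> j < 1"
    and \<alpha>: "\<forall>i<n. 0 \<le> \<alpha> i"
  shows "excess_cover M n \<alpha> \<beta> X (Qa M (\<alpha> j) X) (\<lambda>i. if i = j then space M else {})"
  using prob_gt_Qa_le[OF X j(2,3)] \<alpha> j(1)
  by (auto simp: excess_cover_def Int_absorb1 Aset_def)

lemma upper_tail_layers:
  fixes X :: "'a \<Rightarrow> real" and w :: "nat \<Rightarrow> real"
  assumes X: "X \<in> borel_measurable M" "cont_distributed M X"
    and w: "0 \<le> b" "\<forall>i<n. 0 \<le> w i" "b + (\<Sum>i<n. w i) < 1"
  obtains B where "\<And>i. B i \<in> events" "\<And>i. i < n \<Longrightarrow> prob (B i) = w i"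
    "\<And>i. i < n \<Longrightarrow> w i = 0 \<Longrightarrow> B i = {}"
    "upper_tail M (b + (\<Sum>i<n. w i)) X \<subseteq> upper_tail M b X \<union> (\<Union>i<n. B i)"
proof
  define s where "s k = b + (\<Sum>i<k. w i)" for k
  define B where "B i = upper_tail M (s (Suc i)) X - upper_tail M (s i) X" for i
  have s: "0 \<le> s k" "s k \<le> s (Suc k)" "s (Suc k) < 1" if "k < n" for k
  proof -
    have "(\<Sum>i<Suc k. w i) \<le> (\<Sum>i<n. w i)"
      using that w(2) by (intro sum_mono2) auto
    moreover have "0 \<le> (\<Sum>i<k. w i)"
      using that w(2) by (intro sum_nonneg) auto
    ultimately show "0 \<le> s k" "s k \<le> s (Suc k)" "s (Suc k) < 1"
      using that w by (auto simp: s_def)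
  qed
  show "B i \<in> events" for i using X by (simp add: B_def)
  show "prob (B i) = w i" if "i < n" for i
    using finite_measure_Diff[OF _ _ upper_tail_mono[OF X(1) s(2,3)[OF that]]]
      prob_upper_tail[OF X] s[OF that] X(1)
    by (simp add: B_def s_def)
  show "B i = {}" if "w i = 0" for i
    using that by (simp add: B_def s_def)
  show "upper_tail M (b + (\<Sum>i<n. w i)) X \<subseteq> upper_tail M b X \<union> (\<Union>i<n. B i)"
    using subset_Un_UN_Diff_Suc[of "\<lambda>k. upper_tail M (s k) X" n] by (simp add: B_def s_def)
qed

end

context prob_space
begin

lemma excess_cover_of_upper_tail_cover:
  fixes X :: "'a \<Rightarrow> real"
  assumes X: "X \<in> borel_measurable M" "cont_distributed M X" and \<gamma>: "0 < \<gamma>" "\<gamma> < 1"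
    and E: "\<forall>i<n. E i \<in> events" "\<forall>i<n. prob (E i) \<le> \<alpha> i"
    and cover: "upper_tail M \<gamma> X \<subseteq> (\<Union>i<n. E i)"
    and tail: "\<forall>i<n. E i = {} \<or> (\<forall>p. 1 - \<beta> \<le> p \<and> p < 1 \<longrightarrow> Aset M p X \<subseteq> E i)"
  shows "excess_cover M n \<alpha> \<beta> X (Qa M \<gamma> X) E"
proof -
  have "AE \<omega> in M. Qa M \<gamma> X < X \<omega> \<longrightarrow> \<omega> \<in> upper_tail M \<gamma> X"
    by (rule AE_gt_Qa_in_upper_tail[OF X \<gamma>])
  then have "AE \<omega> in M. Qa M \<gamma> X < X \<omega> \<longrightarrow> (\<exists>i<n. \<omega> \<in> E i)"
    by eventually_elim (use cover in auto)
  moreover have "prob (E i \<inter> {\<omega>\<in>space M. Qa M \<gamma> X < X \<omega>}) \<le> \<alpha> i" if "i < n" for i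
    using finite_measure_mono[OF Int_lower1, of "E i"] E that by (meson order_trans)
  ultimately show ?thesis
    using E tail unfolding excess_cover_def by blast
qed

lemma excess_cover_layers:
  fixes X :: "'a \<Rightarrow> real" and \<alpha> :: "nat \<Rightarrow> real"
  assumes X: "X \<in> borel_measurable M" "cont_distributed M X"
    and j: "j < n" "\<forall>i<n. \<alpha> i \<le> \<alpha> j" and \<alpha>: "\<forall>i<n. 0 < \<alpha> i"
    and \<beta>: "0 \<le> \<beta>" "\<beta> < \<alpha> j" and \<gamma>: "\<beta> + (\<Sum>i<n. max (\<alpha> i - \<beta>) 0) < 1"
  shows "\<exists>E. excess_cover M n \<alpha> \<beta> X (Qa M (\<beta> + (\<Sum>i<n. max (\<alpha> i - \<beta>) 0)) X) E"
proof -
  define w where "w i = max (\<alpha> i - \<beta>) 0" for i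
  have w: "\<forall>i<n. 0 \<le> w i" "\<beta> + (\<Sum>i<n. w i) < 1"
    using \<gamma> by (simp_all add: w_def)
  obtain B where B: "\<And>i. B i \<in> events" "\<And>i. i < n \<Longrightarrow> prob (B i) = w i"
      "\<And>i. i < n \<Longrightarrow> w i = 0 \<Longrightarrow> B i = {}"
      "upper_tail M (\<beta> + (\<Sum>i<n. w i)) X \<subseteq> upper_tail M \<beta> X \<union> (\<Union>i<n. B i)"
    using upper_tail_layers[OF X \<beta>(1) w] by metis
  define \<gamma> where "\<gamma> = \<beta> + (\<Sum>i<n. w i)"
  define E where "E i = (if \<beta> < \<alpha> i then upper_tail M \<beta> X \<union> B i else {})" for i
  have "w j \<le> (\<Sum>i<n. w i)"
    using j(1) by (intro member_le_sum) (auto simp: w_def)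
  then have \<gamma>_bounds: "\<alpha> j \<le> \<gamma>" "\<gamma> < 1"
    using \<beta> \<gamma> by (auto simp: w_def \<gamma>_def)
  have "0 < \<gamma>" using \<alpha> j(1) \<gamma>_bounds(1) by (meson less_le_trans)
  moreover have "\<forall>i<n. E i \<in> events"
    using X(1) B(1) by (simp add: E_def)
  moreover have "prob (E i) \<le> \<alpha> i" if i: "i < n" for i
  proof (cases "\<beta> < \<alpha> i")
    case True
    have "prob (E i) \<le> prob (upper_tail M \<beta> X) + prob (B i)"
      using True X(1) B(1) by (simp add: E_def measure_Un_le)
    then show ?thesis
      using True prob_upper_tail[OF X \<beta>(1)] B(2)[OF i] \<beta> \<gamma>_bounds by (simp add: w_def)
  qed (simp add: E_def less_imp_le[OF \<alpha>[rule_format, OF i]])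
  moreover have "upper_tail M \<gamma> X \<subseteq> (\<Union>i<n. E i)"
  proof -
    have "B i \<subseteq> E i" if "i < n" for i
    proof (cases "\<beta> < \<alpha> i")
      case False
      then show ?thesis using B(3)[OF that] by (simp add: w_def)
    qed (simp add: E_def)
    moreover have "upper_tail M \<beta> X \<subseteq> E j" using \<beta>(2) by (simp add: E_def)
    ultimately have "upper_tail M \<beta> X \<union> (\<Union>i<n. B i) \<subseteq> (\<Union>i<n. E i)"
      using j(1) by blast
    with B(4) show ?thesis unfolding \<gamma>_def by (rule subset_trans)
  qed
  moreover have "E i = {} \<or> (\<forall>p. 1 - \<beta> \<le> p \<and> p < 1 \<longrightarrow> Aset M p X \<subseteq> E i)" for i
  proof (cases "\<beta> < \<alpha> i")
    case True
    have "\<beta> < 1" using \<beta>(2) \<gamma>_bounds by linarith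
    then have "Aset M p X \<subseteq> upper_tail M \<beta> X" if "1 - \<beta> \<le> p" "p < 1" for p
      using Aset_subset_upper_tail[OF X(1) that] by simp
    then show ?thesis using True by (auto simp: E_def)
  qed (simp add: E_def)
  ultimately have "excess_cover M n \<alpha> \<beta> X (Qa M \<gamma> X) E"
    using \<gamma>_bounds(2) by (intro excess_cover_of_upper_tail_cover[OF X]) auto
  then show ?thesis unfolding \<gamma>_def w_def by blast
qed

end

lemma member_lt_of_sum_lt:
  fixes \<alpha> :: "nat \<Rightarrow> real"
  assumes "\<forall>i<n. 0 \<le> \<alpha> i" "(\<Sum>i<n. \<alpha> i) < 1" "i < n"
  shows "\<alpha> i < 1"
  using member_le_sum[of i "{..<n}" \<alpha>] assms by auto

context prob_space
begin

lemma Qa_level_le_sum_Qa: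
  fixes X :: "'a \<Rightarrow> real" and \<alpha> :: "nat \<Rightarrow> real"
  assumes X: "X \<in> borel_measurable M" "cont_distributed M X"
    and \<alpha>: "0 < n" "\<forall>i<n. 0 < \<alpha> i" "(\<Sum>i<n. \<alpha> i) < 1" and \<beta>: "0 \<le> \<beta>"
    and adm: "admissible M n \<beta> X Xs"
  shows "Qa M (min \<beta> (Max (\<alpha> ` {..<n})) + (\<Sum>i<n. max (\<alpha> i - \<beta>) 0)) X
    \<le> (\<Sum>i<n. Qa M (\<alpha> i) (Xs i))"
proof -
  define t where "t = min \<beta> (Max (\<alpha> ` {..<n}))"
  define \<gamma> where "\<gamma> = t + (\<Sum>i<n. max (\<alpha> i - \<beta>) 0)"
  obtain j where j: "j < n" "\<alpha> j = Max (\<alpha> ` {..<n})"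
    using ex_Max_lessThan[OF \<alpha>(1)] .
  have \<alpha>_lt_1: "\<forall>i<n. 0 < \<alpha> i \<and> \<alpha> i < 1"
    using \<alpha> member_lt_of_sum_lt[of n \<alpha>] by (simp add: less_imp_le)
  have "Max (\<alpha> ` {..<n}) \<le> \<gamma>" "\<gamma> \<le> (\<Sum>i<n. \<alpha> i)"
    using level_bounds[OF \<alpha>(1) _ \<beta>] \<alpha>(2) by (simp_all add: \<gamma>_def t_def less_imp_le)
  moreover have "0 < \<alpha> j" using \<alpha>(2) j(1) by simp
  ultimately have \<gamma>: "0 < \<gamma>" "\<gamma> < 1"
    using j(2) \<alpha>(3) by linarith+
  have t: "0 \<le> t" "t \<le> \<beta>" "t < 1"
    using \<beta> \<alpha>_lt_1 j by (auto simp: t_def)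
  have "prob {\<omega>\<in>space M. (\<Sum>i<n. Qa M (\<alpha> i) (Xs i)) < X \<omega>} \<le> t + (\<Sum>i<n. max (\<alpha> i - t) 0)"
    using prob_gt_sum_Qa_le[OF X adm \<alpha>_lt_1 t] .
  also have "\<dots> = \<gamma>"
    using level_eq_min_Max[of \<beta> \<alpha> n] by (simp add: \<gamma>_def t_def)
  finally show ?thesis
    using Qa_le_of_prob_gt_le[OF X(1) \<gamma>]
    by (simp add: \<gamma>_def t_def)
qed

lemma ex_admissible_sum_Qa_le_level:
  fixes X :: "'a \<Rightarrow> real" and \<alpha> :: "nat \<Rightarrow> real"
  assumes X: "X \<in> borel_measurable M" "cont_distributed M X"
    and \<alpha>: "0 < n" "\<forall>i<n. 0 < \<alpha> i" "(\<Sum>i<n. \<alpha> i) < 1" and \<beta>: "0 \<le> \<beta>"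
  shows "\<exists>Xs. admissible M n \<beta> X Xs \<and> (\<Sum>i<n. Qa M (\<alpha> i) (Xs i))
    \<le> Qa M (min \<beta> (Max (\<alpha> ` {..<n})) + (\<Sum>i<n. max (\<alpha> i - \<beta>) 0)) X"
proof -
  define \<gamma> where "\<gamma> = min \<beta> (Max (\<alpha> ` {..<n})) + (\<Sum>i<n. max (\<alpha> i - \<beta>) 0)"
  obtain j where j: "j < n" "\<alpha> j = Max (\<alpha> ` {..<n})"
    using ex_Max_lessThan[OF \<alpha>(1)] .
  have j_max: "\<forall>i<n. \<alpha> i \<le> \<alpha> j"
    using j(2) by simp
  have \<alpha>_lt_1: "\<forall>i<n. 0 < \<alpha> i \<and> \<alpha> i < 1"
    using \<alpha> member_lt_of_sum_lt[of n \<alpha>] by (simp add: less_imp_le)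
  have "\<gamma> \<le> (\<Sum>i<n. \<alpha> i)"
    using level_bounds[OF \<alpha>(1) _ \<beta>] \<alpha>(2) by (simp add: \<gamma>_def less_imp_le)
  then have "\<gamma> < 1" using \<alpha>(3) by linarith
  obtain E where E: "excess_cover M n \<alpha> \<beta> X (Qa M \<gamma> X) E"
  proof (cases "\<alpha> j \<le> \<beta>")
    case True
    then have "max (\<alpha> i - \<beta>) 0 = 0" if "i < n" for i
      using order_trans[OF j_max[rule_format, OF that] True] by simp
    then have "\<gamma> = \<alpha> j"
      using True j(2) by (simp add: \<gamma>_def)
    moreover have "excess_cover M n \<alpha> \<beta> X (Qa M (\<alpha> j) X) (\<lambda>i. if i = j then space M else {})"
      using \<alpha>_lt_1 j(1) by (intro excess_cover_single[OF X(1) j(1)]) (simp_all add: less_imp_le)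
    ultimately show ?thesis using that by simp
  next
    case False
    then have "\<gamma> = \<beta> + (\<Sum>i<n. max (\<alpha> i - \<beta>) 0)"
      using j(2) by (simp add: \<gamma>_def)
    then show ?thesis
      using that excess_cover_layers[OF X j(1) j_max \<alpha>(2) \<beta>] False \<open>\<gamma> < 1\<close> by auto
  qed
  then show ?thesis
    using admissible_excess_split[OF X(1) j(1) E \<alpha>_lt_1] unfolding \<gamma>_def by blast
qed

end

theorem theorem6p1:
  fixes M :: "'a measure" and X :: "'a \<Rightarrow> real" and n :: nat
    and \<alpha> :: "nat \<Rightarrow> real" and \<beta> :: real
  assumes "prob_space M" and "atomless M"
    and "X \<in> borel_measurable M" and "cont_distributed M X"
    and "n \<ge> 1" and "\<forall>i<n. \<alpha> i > 0" and "(\<Sum>i<n. \<alpha> i) < 1"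
    and "0 \<le> \<beta>" and "\<beta> \<le> 1"
  shows "Vbeta M n \<alpha> \<beta> X =
    ereal (Qa M (min \<beta> (Max (\<alpha> ` {..<n})) + (\<Sum>i<n. max (\<alpha> i - \<beta>) 0)) X)"
proof -
  interpret prob_space M by fact
  have n: "0 < n" using \<open>n \<ge> 1\<close> by simp
  obtain Xs where "admissible M n \<beta> X Xs" "(\<Sum>i<n. Qa M (\<alpha> i) (Xs i))
      \<le> Qa M (min \<beta> (Max (\<alpha> ` {..<n})) + (\<Sum>i<n. max (\<alpha> i - \<beta>) 0)) X"
    using ex_admissible_sum_Qa_le_level[OF assms(3,4) n assms(6-8)] by blast
  then show ?thesis
    unfolding Vbeta_eq_Inf_admissible
    by (intro antisym Inf_lower2 Inf_greatest)
      (auto intro!: Qa_level_le_sum_Qa[OF assms(3,4) n assms(6-8)])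
qed

end
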